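(* Let $d\ge 3$ and let $\overrightarrow{F}\in\mathcal{D}'(\mathbb{R}^d)^d$ satisfy, for some $C>0$ and all $u,v\in\mathcal{D}(\mathbb{R}^d)$, \[ \big|\langle\overrightarrow{F},\,v\nabla\overline{u}-\overline{u}\nabla v\rangle\big|\le C\|u\|_{\dot H^{1}}\|v\|_{\dot H^{1}}. \] Let $f=\Delta^{-1}\operatorname{div}\overrightarrow{F}$. Then $\Delta f\in\mathcal{M}(\dot H^{1}\to\dot H^{-1})$.
   Context: $\|u\|_{\dot H^1}=\|\nabla u\|_{L^2(\mathbb{R}^d)}$, $\dot H^1$ is the completion of $\mathcal{D}(\mathbb{R}^d)$ in this norm and $\dot H^{-1}$ is its dual. $\mathcal{M}(\dot H^1\to\dot H^{-1})$ denotes the class of multipliers from $\dot H^1$ to $\dot H^{-1}$: distributions $g$ for which there is a constant $K$ with $|\langle g u,v\rangle|\le K\|u\|_{\dot H^1}\|v\|_{\dot H^1}$ for all $u,v\in\mathcal{D}(\mathbb{R}^d)$. *)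

theory Defs
  imports "HOL-Analysis.Analysis"
begin

text \<open>Complex-valued functions on R^d, with R^d rendered as real^'n (d = CARD('n)).\<close>

definition pd :: "'n::finite \<Rightarrow> (real^'n \<Rightarrow> complex) \<Rightarrow> real^'n \<Rightarrow> complex" where
  "pd i \<phi> x = vector_derivative (\<lambda>t. \<phi> (x + t *\<^sub>R axis i 1)) (at 0)"

fun iter_pd :: "'n::finite list \<Rightarrow> (real^'n \<Rightarrow> complex) \<Rightarrow> real^'n \<Rightarrow> complex" where
  "iter_pd [] \<phi> = \<phi>"
| "iter_pd (i # is) \<phi> = pd i (iter_pd is \<phi>)"

definition smooth_fun :: "(real^'n::finite \<Rightarrow> complex) \<Rightarrow> bool" where
  "smooth_fun \<phi> \<longleftrightarrow> (\<forall>is x. iter_pd is \<phi> differentiable (at x))"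

definition supp :: "(real^'n::finite \<Rightarrow> complex) \<Rightarrow> (real^'n) set" where
  "supp \<phi> = closure {x. \<phi> x \<noteq> 0}"

definition test_fun :: "(real^'n::finite \<Rightarrow> complex) \<Rightarrow> bool" where
  "test_fun \<phi> \<longleftrightarrow> smooth_fun \<phi> \<and> compact (supp \<phi>)"

definition distribution :: "((real^'n::finite \<Rightarrow> complex) \<Rightarrow> complex) \<Rightarrow> bool" where
  "distribution T \<longleftrightarrow>
     (\<forall>\<phi> \<psi>. test_fun \<phi> \<longrightarrow> test_fun \<psi> \<longrightarrow> T (\<lambda>x. \<phi> x + \<psi> x) = T \<phi> + T \<psi>) \<and>
     (\<forall>\<phi> c. test_fun \<phi> \<longrightarrow> T (\<lambda>x. c * \<phi> x) = c * T \<phi>) \<and>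
     (\<forall>K. compact K \<longrightarrow> (\<exists>C N. \<forall>\<phi>. test_fun \<phi> \<longrightarrow> supp \<phi> \<subseteq> K \<longrightarrow>
          cmod (T \<phi>) \<le> C * (\<Sum>is\<in>{is::'n list. length is \<le> N}. (SUP x. cmod (iter_pd is \<phi> x)))))"

definition lap :: "(real^'n::finite \<Rightarrow> complex) \<Rightarrow> real^'n \<Rightarrow> complex" where
  "lap \<phi> x = (\<Sum>i\<in>UNIV. pd i (pd i \<phi>) x)"

definition dist_div :: "('n::finite \<Rightarrow> ((real^'n \<Rightarrow> complex) \<Rightarrow> complex)) \<Rightarrow> (real^'n \<Rightarrow> complex) \<Rightarrow> complex" where
  "dist_div F \<phi> = - (\<Sum>i\<in>UNIV. F i (pd i \<phi>))"

definition dist_lap :: "((real^'n::finite \<Rightarrow> complex) \<Rightarrow> complex) \<Rightarrow> (real^'n \<Rightarrow> complex) \<Rightarrow> complex" where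
  "dist_lap T \<phi> = T (lap \<phi>)"

definition H1_norm :: "(real^'n::finite \<Rightarrow> complex) \<Rightarrow> real" where
  "H1_norm u = sqrt (integral\<^sup>L lborel (\<lambda>x. \<Sum>i\<in>UNIV. (cmod (pd i u x))^2))"

text \<open>Multipliers M(H^1-dot -> H^-1-dot): |<g u, v>| = |g(u v)| <= K ||u|| ||v||.\<close>
definition multiplier_H1 :: "((real^'n::finite \<Rightarrow> complex) \<Rightarrow> complex) \<Rightarrow> bool" where
  "multiplier_H1 g \<longleftrightarrow> (\<exists>K. \<forall>u v. test_fun u \<longrightarrow> test_fun v \<longrightarrow>
       cmod (g (\<lambda>x. u x * v x)) \<le> K * H1_norm u * H1_norm v)"

end

theory Submission
  imports Defs "HOL-Computational_Algebra.Polynomial"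
begin

text \<open>
  Write \<open>T \<phi> = \<Sum>\<^sub>i F\<^sub>i (\<partial>\<^sub>i \<phi>)\<close>, so that \<open>\<langle>\<Delta>f, \<phi>\<rangle> = -T \<phi>\<close> and the claim is
  \<open>|T (u v)| \<le> K \<parallel>u\<parallel> \<parallel>v\<parallel>\<close>. For a real test function \<open>w\<close> and \<open>e > 0\<close> let
  \<open>\<rho> = w\<^sup>2 + e\<^sup>2\<close>, \<open>a = \<rho>\<^bsup>(1+i)/2\<^esup>\<close> and \<open>b = -i \<rho>\<^bsup>(1-i)/2\<^esup>\<close>. Then
  \<open>b \<nabla>a - a \<nabla>b = \<nabla>(w\<^sup>2)\<close> exactly, and \<open>|\<nabla>a|, |\<nabla>b| \<le> \<surd>2 |\<nabla>w|\<close>, so the hypothesis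
  with \<open>u = cnj a\<close>, \<open>v = b\<close> gives \<open>|T (w\<^sup>2)| \<le> 4 C \<parallel>w\<parallel>\<^sup>2\<close>. As \<open>a\<close> and \<open>b\<close> are constant,
  not zero, off the support of \<open>w\<close>, that constant is multiplied by a cutoff \<open>\<eta>\<close> equal to 1
  on the support of \<open>w\<close>; this costs \<open>e \<parallel>\<eta>\<parallel>\<close>, which vanishes as
  \<open>e \<rightarrow> 0\<close>. Polarisation, with the scaling \<open>(f, g) \<mapsto> (t f, g / t)\<close>, extends the bound to
  \<open>T (f g)\<close> for real \<open>f, g\<close>, and splitting into real and imaginary parts to complex \<open>u, v\<close>.
\<close>

lemma pd_has_derivative:
  assumes "(f has_derivative f') (at x)"
  shows "pd i f x = f' (axis i 1)"
proof -
  have "((\<lambda>t::real. x + t *\<^sub>R axis i 1) has_derivative (\<lambda>t. t *\<^sub>R axis i 1)) (at 0)"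
    by (auto intro!: derivative_eq_intros)
  then have "((\<lambda>t. f (x + t *\<^sub>R axis i 1)) has_derivative (\<lambda>t. f' (t *\<^sub>R axis i 1))) (at 0)"
    using has_derivative_compose[of "\<lambda>t::real. x + t *\<^sub>R axis i 1" _ 0 UNIV f f'] assms
    by (simp add: o_def)
  moreover have "(\<lambda>t. f' (t *\<^sub>R axis i 1)) = (\<lambda>t. t *\<^sub>R f' (axis i 1))"
    using has_derivative_linear[OF assms] by (simp add: linear_scale)
  ultimately have "((\<lambda>t. f (x + t *\<^sub>R axis i 1)) has_vector_derivative f' (axis i 1)) (at 0)"
    by (simp add: has_vector_derivative_def)
  then show ?thesis unfolding pd_def by (rule vector_derivative_at)
qed

lemma pd_frechet:
  "f differentiable (at x) \<Longrightarrow> pd i f x = frechet_derivative f (at x) (axis i 1)"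
  by (rule pd_has_derivative) (simp add: frechet_derivative_works[symmetric])

lemma pd_const: "pd i (\<lambda>x. c) x = 0"
  by (rule pd_has_derivative[OF has_derivative_const, simplified])

lemma pd_add:
  assumes "f differentiable (at x)" "g differentiable (at x)"
  shows "pd i (\<lambda>x. f x + g x) x = pd i f x + pd i g x"
  using has_derivative_add[OF assms[unfolded frechet_derivative_works]]
  by (simp add: pd_has_derivative pd_frechet assms)

lemma pd_diff:
  assumes "f differentiable (at x)" "g differentiable (at x)"
  shows "pd i (\<lambda>x. f x - g x) x = pd i f x - pd i g x"
  using has_derivative_diff[OF assms[unfolded frechet_derivative_works]]
  by (simp add: pd_has_derivative pd_frechet assms)

lemma pd_mult:
  assumes "f differentiable (at x)" "g differentiable (at x)"
  shows "pd i (\<lambda>x. f x * g x) x = f x * pd i g x + pd i f x * g x"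
  using has_derivative_mult[OF assms[unfolded frechet_derivative_works]]
  by (simp add: pd_has_derivative pd_frechet assms)

lemma pd_cmult:
  assumes "f differentiable (at x)"
  shows "pd i (\<lambda>x. c * f x) x = c * pd i f x"
  using pd_mult[OF differentiable_const assms] by (simp add: pd_const)

lemma pd_cnj:
  assumes "f differentiable (at x)"
  shows "pd i (\<lambda>x. cnj (f x)) x = cnj (pd i f x)"
  using bounded_linear.has_derivative[OF bounded_linear_cnj assms[unfolded frechet_derivative_works]]
  by (simp add: pd_has_derivative pd_frechet assms)

lemma
  shows differentiable_coord: "(\<lambda>x. of_real (x $ j) :: complex) differentiable (at x)"
    and pd_coord: "pd i (\<lambda>x. of_real (x $ j)) x = of_real (axis i 1 $ j)"
proof -
  have "((\<lambda>x. x $ j) has_derivative (\<lambda>v. v $ j)) (at x)"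
    by (rule bounded_linear_imp_has_derivative) (rule bounded_linear_vec_nth)
  then have "((\<lambda>x. of_real (x $ j) :: complex) has_derivative (\<lambda>v. of_real (v $ j))) (at x)"
    by (auto intro!: derivative_eq_intros)
  then show "(\<lambda>x. of_real (x $ j) :: complex) differentiable (at x)"
      "pd i (\<lambda>x. of_real (x $ j)) x = of_real (axis i 1 $ j)"
    by (auto intro: differentiableI simp: pd_has_derivative)
qed

lemma
  assumes "f differentiable (at x)" "(h has_field_derivative h') (at (f x))"
  shows differentiable_field_chain: "(\<lambda>x. h (f x)) differentiable (at x)"
    and pd_field_chain: "pd i (\<lambda>x. h (f x)) x = h' * pd i f x"
proof -
  have "((\<lambda>x. h (f x)) has_derivative (\<lambda>v. h' * frechet_derivative f (at x) v)) (at x)"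
    using has_derivative_compose[OF assms(1)[unfolded frechet_derivative_works]
        assms(2)[unfolded has_field_derivative_def]]
    by (simp add: o_def)
  then show "(\<lambda>x. h (f x)) differentiable (at x)" "pd i (\<lambda>x. h (f x)) x = h' * pd i f x"
    by (auto intro: differentiableI simp: pd_has_derivative pd_frechet assms)
qed

lemma
  assumes "f differentiable (at x)" "(h has_real_derivative h') (at (Re (f x)))"
  shows differentiable_real_chain: "(\<lambda>x. of_real (h (Re (f x))) :: complex) differentiable (at x)"
    and pd_real_chain: "pd i (\<lambda>x. of_real (h (Re (f x)))) x = of_real (h' * Re (pd i f x))"
proof -
  have "((\<lambda>x. Re (f x)) has_derivative (\<lambda>v. Re (frechet_derivative f (at x) v))) (at x)"
    using assms(1)[unfolded frechet_derivative_works] by (auto intro!: derivative_eq_intros)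
  from has_derivative_compose[OF this assms(2)[unfolded has_field_derivative_def]]
  have "((\<lambda>x. of_real (h (Re (f x))) :: complex) has_derivative
      (\<lambda>v. of_real (h' * Re (frechet_derivative f (at x) v)))) (at x)"
    by (auto simp: o_def intro!: derivative_eq_intros)
  then show "(\<lambda>x. of_real (h (Re (f x))) :: complex) differentiable (at x)"
      "pd i (\<lambda>x. of_real (h (Re (f x)))) x = of_real (h' * Re (pd i f x))"
    by (auto intro: differentiableI simp: pd_has_derivative pd_frechet assms)
qed

lemma
  assumes "f differentiable (at x)"
  shows differentiable_Re: "(\<lambda>x. of_real (Re (f x)) :: complex) differentiable (at x)"
    and pd_Re: "pd i (\<lambda>x. of_real (Re (f x))) x = of_real (Re (pd i f x))"
  using differentiable_real_chain[OF assms, of "\<lambda>t. t" 1] pd_real_chain[OF assms, of "\<lambda>t. t" 1]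
  by simp_all

lemma
  assumes "\<And>x. f differentiable (at x)" "\<forall>x. f x \<notin> \<real>\<^sub>\<le>\<^sub>0"
  shows differentiable_powr: "(\<lambda>x. f x powr p) differentiable (at x)"
    and pd_powr: "pd i (\<lambda>x. f x powr p) = (\<lambda>x. p * f x powr (p - 1) * pd i f x)"
proof -
  have d: "((\<lambda>z. z powr p) has_field_derivative p * f x powr (p - 1)) (at (f x))" for x
    using assms(2) by (intro has_field_derivative_powr) auto
  show "(\<lambda>x. f x powr p) differentiable (at x)"
    by (rule differentiable_field_chain[OF assms(1) d])
  show "pd i (\<lambda>x. f x powr p) = (\<lambda>x. p * f x powr (p - 1) * pd i f x)"
    by (rule ext) (rule pd_field_chain[OF assms(1) d])
qed

lemma
  assumes "\<And>x. f differentiable (at x)" "\<And>t. (h has_real_derivative deriv h t) (at t)"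
  shows differentiable_real_comp: "(\<lambda>x. of_real (h (Re (f x))) :: complex) differentiable (at x)"
    and pd_real_comp: "pd i (\<lambda>x. of_real (h (Re (f x)))) =
      (\<lambda>x. of_real (deriv h (Re (f x))) * of_real (Re (pd i f x)))"
proof -
  show "(\<lambda>x. of_real (h (Re (f x))) :: complex) differentiable (at x)"
    by (rule differentiable_real_chain[OF assms])
  show "pd i (\<lambda>x. of_real (h (Re (f x)))) =
      (\<lambda>x. of_real (deriv h (Re (f x))) * of_real (Re (pd i f x)))"
    by (rule ext) (simp add: pd_real_chain[OF assms])
qed

lemma pd_locally_const:
  assumes "open U" "x \<in> U" "\<And>y. y \<in> U \<Longrightarrow> f y = c"
  shows "pd i f x = 0"
proof -
  let ?V = "(\<lambda>t::real. x + t *\<^sub>R axis i 1) -` U"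
  have "open ?V"
    by (intro continuous_open_vimage assms(1) continuous_intros)
  moreover have "0 \<in> ?V" using assms(2) by simp
  ultimately have "((\<lambda>t. f (x + t *\<^sub>R axis i 1)) has_vector_derivative 0) (at 0)"
    using has_vector_derivative_transform_within_open[OF has_vector_derivative_const[of c]]
    by (metis assms(3) vimageE)
  then show ?thesis unfolding pd_def by (rule vector_derivative_at)
qed

lemma iter_pd_append: "iter_pd (is @ [i]) f = iter_pd is (pd i f)"
  by (induction "is") auto

lemma smooth_fun_pd: "smooth_fun f \<Longrightarrow> smooth_fun (pd i f)"
  unfolding smooth_fun_def by (metis iter_pd_append)

lemma smooth_fun_differentiable: "smooth_fun f \<Longrightarrow> f differentiable (at x)"
  unfolding smooth_fun_def by (metis iter_pd.simps(1))

text \<open>Closure of \<^const>\<open>smooth_fun\<close> under products and compositions is proved for all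
  operations at once: \<open>smooth_gen\<close> is the closure of \<^const>\<open>smooth_fun\<close> under them, and rule
  induction shows that it is stable under \<^const>\<open>pd\<close>, hence contained in \<^const>\<open>smooth_fun\<close>.\<close>

inductive smooth_gen :: "(real^'n::finite \<Rightarrow> complex) \<Rightarrow> bool" where
  smooth: "smooth_fun f \<Longrightarrow> smooth_gen f"
| const: "smooth_gen (\<lambda>x. c)"
| coord: "smooth_gen (\<lambda>x. of_real (x $ j))"
| add: "smooth_gen f \<Longrightarrow> smooth_gen g \<Longrightarrow> smooth_gen (\<lambda>x. f x + g x)"
| mult: "smooth_gen f \<Longrightarrow> smooth_gen g \<Longrightarrow> smooth_gen (\<lambda>x. f x * g x)"
| Re: "smooth_gen f \<Longrightarrow> smooth_gen (\<lambda>x. of_real (Re (f x)))"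
| powr: "smooth_gen f \<Longrightarrow> (\<forall>x. f x \<notin> \<real>\<^sub>\<le>\<^sub>0) \<Longrightarrow> smooth_gen (\<lambda>x. f x powr p)"
| real_comp: "smooth_gen f \<Longrightarrow> (\<forall>k t. (deriv ^^ k) h differentiable (at t)) \<Longrightarrow>
    smooth_gen (\<lambda>x. of_real (h (Re (f x))))"

lemma smooth_gen_cmult: "smooth_gen f \<Longrightarrow> smooth_gen (\<lambda>x. c * f x)"
  by (intro smooth_gen.mult smooth_gen.const)

lemma smooth_gen_diff: "smooth_gen f \<Longrightarrow> smooth_gen g \<Longrightarrow> smooth_gen (\<lambda>x. f x - g x)"
  using smooth_gen.add[OF _ smooth_gen_cmult[of g "-1"]] by simp

lemma smooth_gen_sum:
  "finite A \<Longrightarrow> (\<And>a. a \<in> A \<Longrightarrow> smooth_gen (f a)) \<Longrightarrow> smooth_gen (\<lambda>x. \<Sum>a\<in>A. f a x)"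
  by (induction rule: finite_induct) (simp_all add: smooth_gen.const smooth_gen.add)

lemma smooth_gen_pd:
  "smooth_gen f \<Longrightarrow> (\<forall>x. f differentiable (at x)) \<and> (\<forall>i. smooth_gen (pd i f))"
proof (induction rule: smooth_gen.induct)
  case (smooth f)
  then show ?case by (blast intro: smooth_gen.smooth smooth_fun_pd smooth_fun_differentiable)
next
  case (const c)
  have "pd (i::'a) (\<lambda>x. c) = (\<lambda>x. 0)" for i by (rule ext) (rule pd_const)
  then show ?case by (simp add: smooth_gen.const)
next
  case (coord j)
  have "pd i (\<lambda>x. of_real (x $ j)) = (\<lambda>x. of_real (axis i 1 $ j))" for i
    by (rule ext) (rule pd_coord)
  with differentiable_coord show ?case by (auto intro: smooth_gen.const)
next
  case (add f g)
  then have "pd i (\<lambda>x. f x + g x) = (\<lambda>x. pd i f x + pd i g x)" for i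
    by (intro ext pd_add) auto
  with add show ?case by (auto intro!: smooth_gen.add)
next
  case (mult f g)
  then have "pd i (\<lambda>x. f x * g x) = (\<lambda>x. f x * pd i g x + pd i f x * g x)" for i
    by (intro ext pd_mult) auto
  with mult show ?case by (auto intro!: smooth_gen.add smooth_gen.mult)
next
  case (Re f)
  then have "pd i (\<lambda>x. of_real (Re (f x))) = (\<lambda>x. of_real (Re (pd i f x)))" for i
    by (intro ext pd_Re) auto
  with Re show ?case by (auto intro!: smooth_gen.Re differentiable_Re)
next
  case (powr f p)
  then have "\<And>x. f differentiable (at x)" by blast
  note d = differentiable_powr[OF this powr.hyps(2)] pd_powr[OF this powr.hyps(2)]
  have "smooth_gen (\<lambda>x. p * f x powr (p - 1) * pd i f x)" for i
    using powr by (intro smooth_gen.mult smooth_gen.const smooth_gen.powr) auto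
  with d show ?case by simp
next
  case (real_comp f h)
  have df: "\<And>x. f differentiable (at x)"
    using real_comp.IH by blast
  have dh: "\<And>t. (h has_real_derivative deriv h t) (at t)"
    using real_comp.hyps(2) by (metis DERIV_deriv_iff_real_differentiable funpow_0)
  note d = differentiable_real_comp[OF df dh] pd_real_comp[OF df dh]
  have "\<forall>k t. (deriv ^^ k) (deriv h) differentiable (at t)"
    using real_comp.hyps(2) by (metis funpow_Suc_right o_apply)
  then have "smooth_gen (\<lambda>x. of_real (deriv h (Re (f x))) * of_real (Re (pd i f x)))" for i
    using real_comp by (intro smooth_gen.mult smooth_gen.real_comp smooth_gen.Re) auto
  with d show ?case by simp
qed

lemma smooth_gen_smooth: "smooth_gen f \<Longrightarrow> smooth_fun f"
proof -
  have "smooth_gen (iter_pd is f)" if "smooth_gen f" for "is" and f :: "real^'n::finite \<Rightarrow> complex"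
    using that by (induction "is") (simp_all add: smooth_gen_pd)
  then show "smooth_gen f \<Longrightarrow> smooth_fun f"
    unfolding smooth_fun_def using smooth_gen_pd by blast
qed

lemma smooth_gen_differentiable: "smooth_gen f \<Longrightarrow> f differentiable (at x)"
  using smooth_gen_pd by blast

lemma notin_supp_zero: "x \<notin> supp f \<Longrightarrow> f x = 0"
  using closure_subset[of "{x. f x \<noteq> 0}"] unfolding supp_def by blast

lemma supp_subset:
  assumes "closed K" "\<And>x. f x \<noteq> 0 \<Longrightarrow> x \<in> K"
  shows "supp f \<subseteq> K"
  unfolding supp_def using assms by (intro closure_minimal subsetI) auto

lemma pd_notin_supp:
  assumes "x \<notin> supp f"
  shows "pd i f x = 0"
proof -
  have "open (- supp f)"
    by (simp add: supp_def open_Compl)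
  with assms show ?thesis
    by (intro pd_locally_const[of "- supp f" x f 0]) (auto intro: notin_supp_zero)
qed

lemma test_funI:
  assumes "smooth_gen f" "compact K" "\<And>x. x \<notin> K \<Longrightarrow> f x = 0"
  shows "test_fun f"
proof -
  have "supp f \<subseteq> K"
    using assms(2,3) by (intro supp_subset compact_imp_closed) auto
  then have "compact (supp f)"
    using compact_Int_closed[OF assms(2), of "supp f"] by (simp add: supp_def Int_absorb1)
  with smooth_gen_smooth[OF assms(1)] show ?thesis by (simp add: test_fun_def)
qed

lemma test_fun_compact_supp: "test_fun f \<Longrightarrow> compact (supp f)"
  by (simp add: test_fun_def)

lemma test_fun_smooth_gen: "test_fun f \<Longrightarrow> smooth_gen f"
  by (simp add: test_fun_def smooth_gen.smooth)

lemma test_fun_differentiable: "test_fun f \<Longrightarrow> f differentiable (at x)"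
  using smooth_gen_pd test_fun_smooth_gen by blast

lemma test_fun_pd: "test_fun f \<Longrightarrow> test_fun (pd i f)"
  by (rule test_funI[of _ "supp f"])
    (auto simp: test_fun_compact_supp pd_notin_supp dest: test_fun_smooth_gen smooth_gen_pd)

lemma test_fun_add: "test_fun f \<Longrightarrow> test_fun g \<Longrightarrow> test_fun (\<lambda>x. f x + g x)"
  by (rule test_funI[of _ "supp f \<union> supp g"])
    (auto simp: test_fun_compact_supp notin_supp_zero intro: smooth_gen.add test_fun_smooth_gen)

lemma test_fun_mult: "test_fun f \<Longrightarrow> test_fun g \<Longrightarrow> test_fun (\<lambda>x. f x * g x)"
  by (rule test_funI[of _ "supp f"])
    (auto simp: test_fun_compact_supp notin_supp_zero intro: smooth_gen.mult test_fun_smooth_gen)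

lemma test_fun_cmult: "test_fun f \<Longrightarrow> test_fun (\<lambda>x. c * f x)"
  by (rule test_funI[of _ "supp f"])
    (auto simp: test_fun_compact_supp notin_supp_zero intro: smooth_gen_cmult test_fun_smooth_gen)

lemma test_fun_diff: "test_fun f \<Longrightarrow> test_fun g \<Longrightarrow> test_fun (\<lambda>x. f x - g x)"
  using test_fun_add[OF _ test_fun_cmult[of g "- 1"]] by simp

lemma test_fun_Re: "test_fun f \<Longrightarrow> test_fun (\<lambda>x. of_real (Re (f x)))"
  by (rule test_funI[of _ "supp f"])
    (auto simp: test_fun_compact_supp notin_supp_zero intro: smooth_gen.Re test_fun_smooth_gen)

lemma test_fun_Im: "test_fun f \<Longrightarrow> test_fun (\<lambda>x. of_real (Im (f x)))"
  using test_fun_Re[OF test_fun_cmult[of f "- \<i>"]] by simp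

lemma test_fun_cnj:
  assumes "test_fun f"
  shows "test_fun (\<lambda>x. cnj (f x))"
proof -
  have "(\<lambda>x. cnj (f x)) = (\<lambda>x. 2 * of_real (Re (f x)) - f x)"
    by (auto simp: complex_eq_iff)
  moreover have "smooth_gen (\<lambda>x. 2 * of_real (Re (f x)) - f x)"
    using assms by (intro smooth_gen_diff smooth_gen_cmult smooth_gen.Re test_fun_smooth_gen)
  ultimately show ?thesis
    using assms by (intro test_funI[of _ "supp f"]) (auto simp: test_fun_compact_supp notin_supp_zero)
qed

section \<open>A smooth cutoff function\<close>

lemma poly_exp_neg_tendsto_0: "((\<lambda>s. poly p s * exp (- s)) \<longlongrightarrow> (0::real)) at_top"
proof -
  have "poly p s * exp (- s) = (\<Sum>i\<le>degree p. coeff p i * (s ^ i / exp s))" for s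
    by (simp add: poly_altdef exp_minus divide_inverse sum_distrib_right mult.assoc)
  moreover have "((\<lambda>s. \<Sum>i\<le>degree p. coeff p i * (s ^ i / exp s)) \<longlongrightarrow> 0) at_top"
    by (intro tendsto_null_sum tendsto_mult_right_zero tendsto_power_div_exp_0)
  ultimately show ?thesis by simp
qed

definition poly_exp_recip :: "real poly \<Rightarrow> real \<Rightarrow> real" where
  "poly_exp_recip p t = (if t > 0 then poly p (1 / t) * exp (- (1 / t)) else 0)"

lemma poly_exp_recip_flat_at_0: "((\<lambda>h. poly_exp_recip p h / h) \<longlongrightarrow> 0) (at 0)"
proof -
  have "((\<lambda>h. poly_exp_recip p h / h) \<longlongrightarrow> 0) (at_left 0)"
    by (rule tendsto_eventually)
      (use eventually_at_left_real[of "-1" 0] in \<open>auto elim: eventually_mono simp: poly_exp_recip_def\<close>)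
  moreover have "((\<lambda>h. poly_exp_recip p h / h) \<longlongrightarrow> 0) (at_right 0)"
  proof -
    from filterlim_compose[OF poly_exp_neg_tendsto_0 filterlim_inverse_at_top_right]
    have "((\<lambda>h. poly (pCons 0 p) (inverse h) * exp (- inverse h)) \<longlongrightarrow> 0) (at_right 0)" .
    then show ?thesis
      by (rule Lim_transform_eventually)
        (use eventually_at_right_less[of "0::real"] in
          \<open>auto elim: eventually_mono simp: poly_exp_recip_def field_simps\<close>)
  qed
  ultimately show ?thesis by (simp add: filterlim_at_split)
qed

lemma poly_exp_recip_has_derivative:
  "(poly_exp_recip p has_real_derivative poly_exp_recip (monom 1 2 * (p - pderiv p)) t) (at t)"
proof (cases t "0::real" rule: linorder_cases)
  case less
  then have "((\<lambda>t. 0) has_real_derivative poly_exp_recip (monom 1 2 * (p - pderiv p)) t) (at t)"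
    by (simp add: poly_exp_recip_def)
  then show ?thesis
    by (rule has_field_derivative_transform_within_open[of _ _ _ "{..<0}"])
      (use less in \<open>auto simp: poly_exp_recip_def\<close>)
next
  case equal
  have "(poly_exp_recip p has_real_derivative 0) (at 0)"
    using poly_exp_recip_flat_at_0 by (simp add: DERIV_def poly_exp_recip_def)
  then show ?thesis using equal by (simp add: poly_exp_recip_def)
next
  case greater
  have "((\<lambda>t. poly p (1/t) * exp (- (1/t))) has_real_derivative
      poly (pderiv p) (1/t) * (- (1 / t^2)) * exp (- (1/t)) + poly p (1/t) * (exp (- (1/t)) * (1/t^2)))
      (at t)"
    using greater
    by (auto intro!: derivative_eq_intros DERIV_chain2[OF poly_DERIV] simp: power2_eq_square field_simps)
  moreover have "poly (pderiv p) (1/t) * (- (1 / t^2)) * exp (- (1/t)) + poly p (1/t) * (exp (- (1/t)) * (1/t^2))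
      = poly_exp_recip (monom 1 2 * (p - pderiv p)) t"
    using greater by (simp add: poly_exp_recip_def poly_monom field_simps)
  ultimately have "((\<lambda>t. poly p (1/t) * exp (- (1/t))) has_real_derivative
      poly_exp_recip (monom 1 2 * (p - pderiv p)) t) (at t)"
    by simp
  then show ?thesis
    by (rule has_field_derivative_transform_within_open[of _ _ _ "{0<..}"])
      (use greater in \<open>auto simp: poly_exp_recip_def\<close>)
qed

lemma deriv_iter_poly_exp_recip: "\<exists>q. (deriv ^^ k) (poly_exp_recip p) = poly_exp_recip q"
proof (induction k arbitrary: p)
  case (Suc k)
  have "deriv (poly_exp_recip p) = poly_exp_recip (monom 1 2 * (p - pderiv p))"
    using poly_exp_recip_has_derivative DERIV_imp_deriv by blast
  then show ?case using Suc by (metis funpow_Suc_right o_apply)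
qed auto

lemma poly_exp_recip_smooth: "(deriv ^^ k) (poly_exp_recip p) differentiable (at t)"
  using deriv_iter_poly_exp_recip poly_exp_recip_has_derivative real_differentiable_def
  by (metis differentiableI field_differentiable_def field_differentiable_imp_differentiable)

definition cutoff :: "real \<Rightarrow> real^'n::finite \<Rightarrow> complex" where
  "cutoff R x = of_real (poly_exp_recip 1 (R + 1 - norm x ^ 2) /
     (poly_exp_recip 1 (R + 1 - norm x ^ 2) + poly_exp_recip 1 (norm x ^ 2 - R)))"

lemma smooth_gen_cutoff: "smooth_gen (cutoff R :: real^'n::finite \<Rightarrow> complex)"
proof -
  define q :: "real^'n \<Rightarrow> complex" where "q x = (\<Sum>j\<in>UNIV. of_real (x $ j) * of_real (x $ j))" for x
  have q: "smooth_gen q"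
    unfolding q_def by (rule smooth_gen_sum) (simp_all add: smooth_gen.mult smooth_gen.coord)
  have Re_q: "Re (q x) = norm x ^ 2" for x
    by (simp add: q_def Re_sum power2_norm_eq_inner inner_vec_def)
  define A where "A x = (of_real (poly_exp_recip 1 (Re (of_real (R + 1) - q x))) :: complex)" for x
  define B where "B x = (of_real (poly_exp_recip 1 (Re (q x - of_real R))) :: complex)" for x
  have sA: "smooth_gen A"
    unfolding A_def
    by (rule smooth_gen.real_comp[OF smooth_gen_diff[OF smooth_gen.const q]])
      (simp add: poly_exp_recip_smooth)
  have sB: "smooth_gen B"
    unfolding B_def
    by (rule smooth_gen.real_comp[OF smooth_gen_diff[OF q smooth_gen.const]])
      (simp add: poly_exp_recip_smooth)
  have AB: "A x + B x =
      of_real (poly_exp_recip 1 (R + 1 - norm x ^ 2) + poly_exp_recip 1 (norm x ^ 2 - R))" for x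
    by (simp add: A_def B_def Re_q)
  have "A x + B x \<notin> \<real>\<^sub>\<le>\<^sub>0" for x
  proof -
    have "poly_exp_recip 1 (R + 1 - norm x ^ 2) + poly_exp_recip 1 (norm x ^ 2 - R) > 0"
      by (cases "R + 1 - norm x ^ 2 > 0") (simp_all add: poly_exp_recip_def add_pos_pos)
    then show ?thesis
      unfolding AB by (simp add: complex_nonpos_Reals_iff)
  qed
  with sA sB have "smooth_gen (\<lambda>x. A x * (A x + B x) powr (- 1))"
    by (intro smooth_gen.mult smooth_gen.powr smooth_gen.add) auto
  moreover have "cutoff R = (\<lambda>x. A x * (A x + B x) powr (- 1))"
    by (rule ext, unfold AB powr_minus) (simp add: cutoff_def A_def Re_q divide_inverse)
  ultimately show ?thesis by simp
qed

lemma cutoff_eq_1: "norm x ^ 2 \<le> R \<Longrightarrow> cutoff R x = 1"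
  by (simp add: cutoff_def poly_exp_recip_def)

lemma cutoff_eq_0: "R + 1 \<le> norm x ^ 2 \<Longrightarrow> cutoff R x = 0"
  by (simp add: cutoff_def poly_exp_recip_def)

lemma bump_exists:
  fixes K :: "(real^'n::finite) set"
  assumes "compact K"
  shows "\<exists>\<eta>. test_fun \<eta> \<and> (\<forall>x\<in>K. \<eta> x = 1)"
proof -
  obtain B where B: "B \<ge> 0" "\<And>x. x \<in> K \<Longrightarrow> norm x \<le> B"
    using compact_imp_bounded[OF assms] by (meson bounded_pos less_imp_le)
  have "test_fun (cutoff (B^2) :: real^'n \<Rightarrow> complex)"
  proof (rule test_funI[OF smooth_gen_cutoff compact_cball[of 0 "sqrt (B^2 + 1)"]])
    fix x :: "real^'n"
    assume "x \<notin> cball 0 (sqrt (B^2 + 1))"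
    then have "sqrt (B^2 + 1) ^ 2 < norm x ^ 2"
      by (intro power_strict_mono) auto
    then have "B^2 + 1 \<le> norm x ^ 2"
      by simp
    then show "cutoff (B^2) x = 0" by (rule cutoff_eq_0)
  qed
  moreover have "cutoff (B^2) x = 1" if "x \<in> K" for x
    using B that by (intro cutoff_eq_1 power_mono) auto
  ultimately show ?thesis by blast
qed

definition grad_sq :: "(real^'n::finite \<Rightarrow> complex) \<Rightarrow> real^'n \<Rightarrow> real" where
  "grad_sq f x = (\<Sum>i\<in>UNIV. (cmod (pd i f x))^2)"

lemma grad_sq_nonneg: "grad_sq f x \<ge> 0"
  by (simp add: grad_sq_def sum_nonneg)

lemma H1_norm_eq_sqrt: "H1_norm f = sqrt (integral\<^sup>L lborel (grad_sq f))"
  by (simp add: H1_norm_def grad_sq_def[abs_def])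

lemma H1_norm_sq: "H1_norm f ^ 2 = integral\<^sup>L lborel (grad_sq f)"
  by (simp add: H1_norm_eq_sqrt Bochner_Integration.integral_nonneg grad_sq_nonneg)

lemma H1_norm_nonneg: "H1_norm f \<ge> 0"
  by (simp add: H1_norm_eq_sqrt Bochner_Integration.integral_nonneg grad_sq_nonneg)

lemma integrable_grad_sq:
  assumes "test_fun f"
  shows "integrable lborel (grad_sq f)"
proof -
  have "continuous_on UNIV (pd i f)" for i
    using assms by (intro continuous_at_imp_continuous_on ballI differentiable_imp_continuous_within
        test_fun_differentiable test_fun_pd)
  then have "continuous_on (supp f) (grad_sq f)"
    unfolding grad_sq_def by (intro continuous_intros) (auto intro: continuous_on_subset)
  then have "integrable lborel (\<lambda>x. indicator (supp f) x *\<^sub>R grad_sq f x)"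
    using assms by (intro borel_integrable_compact test_fun_compact_supp)
  moreover have "(\<lambda>x. indicator (supp f) x *\<^sub>R grad_sq f x) = grad_sq f"
    by (rule ext) (auto simp: grad_sq_def pd_notin_supp indicator_def)
  ultimately show ?thesis by simp
qed

lemma H1_norm_mono:
  assumes "test_fun f" "test_fun g" "\<And>x. grad_sq f x \<le> grad_sq g x"
  shows "H1_norm f \<le> H1_norm g"
  using integral_mono[OF integrable_grad_sq[OF assms(1)] integrable_grad_sq[OF assms(2)] assms(3)]
  by (simp add: H1_norm_eq_sqrt)

lemma H1_norm_sq_le:
  assumes "test_fun f" "test_fun g" "test_fun h"
    and "\<And>x. grad_sq f x \<le> \<alpha> * grad_sq g x + \<beta> * grad_sq h x"
  shows "H1_norm f ^ 2 \<le> \<alpha> * H1_norm g ^ 2 + \<beta> * H1_norm h ^ 2"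
proof -
  note ig = integrable_grad_sq[OF assms(2)] and ih = integrable_grad_sq[OF assms(3)]
  have "integral\<^sup>L lborel (grad_sq f) \<le> integral\<^sup>L lborel (\<lambda>x. \<alpha> * grad_sq g x + \<beta> * grad_sq h x)"
    using ig ih by (intro integral_mono integrable_grad_sq assms) auto
  also have "\<dots> = \<alpha> * integral\<^sup>L lborel (grad_sq g) + \<beta> * integral\<^sup>L lborel (grad_sq h)"
    using ig ih by simp
  finally show ?thesis by (simp add: H1_norm_sq)
qed

lemma grad_sq_combination_le:
  assumes "\<And>i. pd i f x = \<alpha> * pd i g x + \<beta> * pd i h x" "cmod \<alpha> \<le> M"
  shows "grad_sq f x \<le> 2 * M^2 * grad_sq g x + 2 * (cmod \<beta>)^2 * grad_sq h x"
proof -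
  have "(cmod (pd i f x))^2 \<le> 2 * M^2 * (cmod (pd i g x))^2 + 2 * (cmod \<beta>)^2 * (cmod (pd i h x))^2"
    for i
  proof -
    have "cmod (pd i f x) \<le> cmod (\<alpha> * pd i g x) + cmod (\<beta> * pd i h x)"
      unfolding assms(1) by (rule norm_triangle_ineq)
    also have "\<dots> \<le> M * cmod (pd i g x) + cmod \<beta> * cmod (pd i h x)"
      using assms(2) by (simp add: norm_mult mult_right_mono)
    finally have "(cmod (pd i f x))^2 \<le> (M * cmod (pd i g x) + cmod \<beta> * cmod (pd i h x))^2"
      by (simp add: power_mono)
    also have "\<dots> \<le> 2 * (M * cmod (pd i g x))^2 + 2 * (cmod \<beta> * cmod (pd i h x))^2"
      using sum_squares_bound[of "M * cmod (pd i g x)" "cmod \<beta> * cmod (pd i h x)"]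
      by (simp add: power2_sum)
    finally show ?thesis by (simp add: power_mult_distrib)
  qed
  then have "grad_sq f x \<le>
      (\<Sum>i\<in>UNIV. 2 * M^2 * (cmod (pd i g x))^2 + 2 * (cmod \<beta>)^2 * (cmod (pd i h x))^2)"
    unfolding grad_sq_def by (rule sum_mono)
  also have "\<dots> = 2 * M^2 * grad_sq g x + 2 * (cmod \<beta>)^2 * grad_sq h x"
    by (simp add: grad_sq_def sum.distrib sum_distrib_left)
  finally show ?thesis .
qed

lemma H1_norm_combination_sq_le:
  assumes "test_fun f" "test_fun g"
  shows "H1_norm (\<lambda>x. \<alpha> * f x + \<beta> * g x) ^ 2
    \<le> 2 * (cmod \<alpha>)^2 * H1_norm f ^ 2 + 2 * (cmod \<beta>)^2 * H1_norm g ^ 2"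
proof (rule H1_norm_sq_le[OF test_fun_add[OF test_fun_cmult test_fun_cmult] assms, OF assms])
  fix x
  have "pd i (\<lambda>x. \<alpha> * f x + \<beta> * g x) x = \<alpha> * pd i f x + \<beta> * pd i g x" for i
    using assms by (simp add: pd_add pd_cmult differentiable_mult test_fun_differentiable)
  then show "grad_sq (\<lambda>x. \<alpha> * f x + \<beta> * g x) x
      \<le> 2 * (cmod \<alpha>)^2 * grad_sq f x + 2 * (cmod \<beta>)^2 * grad_sq g x"
    by (rule grad_sq_combination_le) simp
qed

lemma H1_norm_cmult:
  assumes "test_fun f"
  shows "H1_norm (\<lambda>x. c * f x) = cmod c * H1_norm f"
proof -
  have "grad_sq (\<lambda>x. c * f x) = (\<lambda>x. (cmod c)^2 * grad_sq f x)"
    using assms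
    by (simp add: fun_eq_iff grad_sq_def pd_cmult test_fun_differentiable norm_mult
        power_mult_distrib sum_distrib_left)
  then show ?thesis
    by (simp add: H1_norm_eq_sqrt real_sqrt_mult)
qed

lemma H1_norm_cnj:
  assumes "test_fun f"
  shows "H1_norm (\<lambda>x. cnj (f x)) = H1_norm f"
  using assms by (simp add: H1_norm_def pd_cnj test_fun_differentiable)

lemma H1_norm_Re_le:
  assumes "test_fun f"
  shows "H1_norm (\<lambda>x. of_real (Re (f x))) \<le> H1_norm f"
proof (rule H1_norm_mono[OF test_fun_Re[OF assms] assms])
  fix x
  have "cmod (pd i (\<lambda>x. of_real (Re (f x))) x) \<le> cmod (pd i f x)" for i
    using assms by (simp add: pd_Re test_fun_differentiable abs_Re_le_cmod)
  then show "grad_sq (\<lambda>x. of_real (Re (f x))) x \<le> grad_sq f x"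
    unfolding grad_sq_def by (intro sum_mono power_mono) auto
qed

lemma H1_norm_Im_le:
  assumes "test_fun f"
  shows "H1_norm (\<lambda>x. of_real (Im (f x))) \<le> H1_norm f"
  using H1_norm_Re_le[OF test_fun_cmult[OF assms, of "- \<i>"]] H1_norm_cmult[OF assms, of "- \<i>"]
  by simp

definition pair_grad ::
    "('n::finite \<Rightarrow> (real^'n \<Rightarrow> complex) \<Rightarrow> complex) \<Rightarrow> (real^'n \<Rightarrow> complex) \<Rightarrow> complex" where
  "pair_grad F \<phi> = (\<Sum>i\<in>UNIV. F i (pd i \<phi>))"

definition wronskian_pairing :: "('n::finite \<Rightarrow> (real^'n \<Rightarrow> complex) \<Rightarrow> complex) \<Rightarrow>
    (real^'n \<Rightarrow> complex) \<Rightarrow> (real^'n \<Rightarrow> complex) \<Rightarrow> complex" where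
  "wronskian_pairing F u v =
     (\<Sum>i\<in>UNIV. F i (\<lambda>x. v x * pd i (\<lambda>y. cnj (u y)) x - cnj (u x) * pd i v x))"

lemma distribution_add:
  "distribution T \<Longrightarrow> test_fun \<phi> \<Longrightarrow> test_fun \<psi> \<Longrightarrow> T (\<lambda>x. \<phi> x + \<psi> x) = T \<phi> + T \<psi>"
  by (simp add: distribution_def)

lemma distribution_cmult: "distribution T \<Longrightarrow> test_fun \<phi> \<Longrightarrow> T (\<lambda>x. c * \<phi> x) = c * T \<phi>"
  by (simp add: distribution_def)

lemma pair_grad_add:
  assumes "\<forall>i. distribution (F i)" "test_fun f" "test_fun g"
  shows "pair_grad F (\<lambda>x. f x + g x) = pair_grad F f + pair_grad F g"
proof -
  have "pd i (\<lambda>x. f x + g x) = (\<lambda>x. pd i f x + pd i g x)" for i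
    using assms by (intro ext pd_add test_fun_differentiable)
  then show ?thesis
    using assms by (simp add: pair_grad_def distribution_add test_fun_pd sum.distrib)
qed

lemma pair_grad_cmult:
  assumes "\<forall>i. distribution (F i)" "test_fun f"
  shows "pair_grad F (\<lambda>x. c * f x) = c * pair_grad F f"
proof -
  have "pd i (\<lambda>x. c * f x) = (\<lambda>x. c * pd i f x)" for i
    using assms by (intro ext pd_cmult test_fun_differentiable)
  then show ?thesis
    using assms by (simp add: pair_grad_def distribution_cmult test_fun_pd sum_distrib_left)
qed

lemma pair_grad_diff:
  assumes "\<forall>i. distribution (F i)" "test_fun f" "test_fun g"
  shows "pair_grad F (\<lambda>x. f x - g x) = pair_grad F f - pair_grad F g"
  using pair_grad_add[OF assms(1,2) test_fun_cmult[OF assms(3), of "- 1"]]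
    pair_grad_cmult[OF assms(1,3), of "- 1"]
  by simp

section \<open>Regularised complex powers\<close>

lemma real_sq_add_of_real: "z \<in> \<real> \<Longrightarrow> z * z + of_real c = of_real (Re z ^ 2 + c)"
  by (auto elim!: Reals_cases simp: power2_eq_square)

lemma real_sq_add_pos_notin_nonpos_Reals:
  fixes z :: complex
  assumes "z \<in> \<real>" "e > 0"
  shows "z * z + of_real (e^2) \<notin> \<real>\<^sub>\<le>\<^sub>0"
proof -
  have "z * z + of_real (e^2) = of_real (Re z ^ 2 + e^2)"
    by (rule real_sq_add_of_real[OF assms(1)])
  moreover have "Re z ^ 2 + e^2 > 0"
    using assms(2) by (simp add: add_nonneg_pos)
  ultimately show ?thesis
    by (metis Re_complex_of_real complex_nonpos_Reals_iff not_le)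
qed

definition cut_power ::
    "complex \<Rightarrow> real \<Rightarrow> (real^'n::finite \<Rightarrow> complex) \<Rightarrow> (real^'n \<Rightarrow> complex) \<Rightarrow> real^'n \<Rightarrow> complex" where
  "cut_power p e w \<eta> x = (w x * w x + of_real (e^2)) powr p - of_real (e^2) powr p * (1 - \<eta> x)"

lemma smooth_gen_cut_power:
  assumes "test_fun w" "\<forall>x. w x \<in> \<real>" "e > 0" "test_fun \<eta>"
  shows "smooth_gen (\<lambda>x. (w x * w x + of_real (e^2)) powr p)" "smooth_gen (cut_power p e w \<eta>)"
proof -
  have "w x * w x + of_real (e^2) \<notin> \<real>\<^sub>\<le>\<^sub>0" for x
    using assms(2,3) real_sq_add_pos_notin_nonpos_Reals by blast
  then show pw: "smooth_gen (\<lambda>x. (w x * w x + of_real (e^2)) powr p)"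
    using assms(1) by (intro smooth_gen.powr smooth_gen.add smooth_gen.mult smooth_gen.const
        test_fun_smooth_gen) auto
  show "smooth_gen (cut_power p e w \<eta>)"
    unfolding cut_power_def[abs_def] using assms(4)
    by (intro smooth_gen_diff[OF pw] smooth_gen_cmult smooth_gen_diff smooth_gen.const
        test_fun_smooth_gen)
qed

lemma test_fun_cut_power:
  assumes "test_fun w" "\<forall>x. w x \<in> \<real>" "e > 0" "test_fun \<eta>"
  shows "test_fun (cut_power p e w \<eta>)"
  using assms
  by (intro test_funI[OF smooth_gen_cut_power(2)[OF assms], of "supp w \<union> supp \<eta>"])
    (auto simp: test_fun_compact_supp cut_power_def notin_supp_zero)

lemma pd_cut_power:
  assumes "test_fun w" "\<forall>x. w x \<in> \<real>" "e > 0" "test_fun \<eta>"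
  shows "pd i (cut_power p e w \<eta>) x =
    p * (w x * w x + of_real (e^2)) powr (p - 1) * pd i (\<lambda>x. w x * w x) x
      + of_real (e^2) powr p * pd i \<eta> x"
proof -
  define \<rho> where "\<rho> x = w x * w x + of_real (e^2)" for x
  have d\<rho>: "\<rho> differentiable (at x)" for x
    unfolding \<rho>_def using assms(1) by (intro differentiable_add differentiable_mult
        differentiable_const test_fun_differentiable)
  have pd\<rho>: "pd i \<rho> x = pd i (\<lambda>x. w x * w x) x"
    unfolding \<rho>_def using assms(1)
    by (simp add: pd_add pd_const differentiable_mult test_fun_differentiable)
  have "\<rho> x \<notin> \<real>\<^sub>\<le>\<^sub>0"
    using assms(2,3) real_sq_add_pos_notin_nonpos_Reals unfolding \<rho>_def by blast
  then have "pd i (\<lambda>x. \<rho> x powr p) x = p * \<rho> x powr (p - 1) * pd i \<rho> x"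
    by (intro pd_field_chain[OF d\<rho>] has_field_derivative_powr)
  moreover have "pd i (\<lambda>x. of_real (e^2) powr p * (1 - \<eta> x)) x
      = - (of_real (e^2) powr p * pd i \<eta> x)"
    using assms(4) by (simp add: pd_cmult pd_diff pd_const test_fun_differentiable)
  moreover have "(\<lambda>x. \<rho> x powr p) differentiable (at x)"
    using smooth_gen_cut_power(1)[OF assms] by (simp add: \<rho>_def smooth_gen_differentiable)
  ultimately show ?thesis
    using assms(4) pd\<rho> unfolding cut_power_def[abs_def] \<rho>_def[symmetric]
    by (simp add: pd_diff test_fun_differentiable)
qed

lemma cmod_powr_real_sq_add_mult_le:
  fixes z :: complex
  assumes "z \<in> \<real>" "e > 0" "Re p = 1/2"
  shows "cmod ((z * z + of_real (e^2)) powr (p - 1) * z) \<le> 1"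
proof -
  define r where "r = Re z ^ 2 + e^2"
  have r: "z * z + of_real (e^2) = of_real r" "r > 0"
    using real_sq_add_of_real[OF assms(1)] assms(2) by (simp_all add: r_def add_nonneg_pos)
  have "cmod ((z * z + of_real (e^2)) powr (p - 1)) = r powr (- (1/2))"
    using r by (simp add: norm_powr_real_powr assms(3))
  also have "\<dots> = 1 / sqrt r"
    using r by (simp add: powr_minus_divide powr_half_sqrt)
  finally have "cmod ((z * z + of_real (e^2)) powr (p - 1) * z) = cmod z / sqrt r"
    by (simp add: norm_mult)
  moreover have "cmod z \<le> sqrt r"
    using assms(1) real_sqrt_le_mono[of "Re z ^ 2" r]
    by (simp add: r_def cmod_eq_Re complex_is_Real_iff)
  ultimately show ?thesis
    using r by simp
qed

lemma cmod_of_real_sq_powr: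
  assumes "e \<ge> 0" "Re p = 1/2"
  shows "cmod (of_real (e^2) powr p) = e"
  using assms(1) by (simp add: norm_powr_real_powr powr_half_sqrt assms(2))

lemma grad_sq_cut_power_le:
  assumes "test_fun w" "\<forall>x. w x \<in> \<real>" "e > 0" "test_fun \<eta>" "Re p = 1/2"
  shows "grad_sq (cut_power p e w \<eta>) x \<le> 8 * (cmod p)^2 * grad_sq w x + 2 * e^2 * grad_sq \<eta> x"
proof -
  define c where "c = 2 * p * ((w x * w x + of_real (e^2)) powr (p - 1) * w x)"
  have "pd i (cut_power p e w \<eta>) x = c * pd i w x + of_real (e^2) powr p * pd i \<eta> x" for i
    using assms(1) by (simp add: pd_cut_power[OF assms(1-4)] pd_mult test_fun_differentiable c_def
        algebra_simps)
  moreover have "cmod c \<le> 2 * cmod p"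
    using cmod_powr_real_sq_add_mult_le[OF _ assms(3,5), of "w x"] assms(2)
    by (simp add: c_def norm_mult mult_left_le)
  ultimately have "grad_sq (cut_power p e w \<eta>) x \<le>
      2 * (2 * cmod p)^2 * grad_sq w x + 2 * (cmod (of_real (e^2) powr p))^2 * grad_sq \<eta> x"
    by (rule grad_sq_combination_le)
  then show ?thesis
    using cmod_of_real_sq_powr[OF less_imp_le[OF assms(3)] assms(5)] by (simp add: power_mult_distrib)
qed

lemma H1_norm_cut_power_sq_le:
  assumes "test_fun w" "\<forall>x. w x \<in> \<real>" "e > 0" "test_fun \<eta>" "Re p = 1/2"
  shows "H1_norm (cut_power p e w \<eta>) ^ 2 \<le> 8 * (cmod p)^2 * H1_norm w ^ 2 + 2 * e^2 * H1_norm \<eta> ^ 2"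
  by (rule H1_norm_sq_le[OF test_fun_cut_power[OF assms(1-4)] assms(1,4)])
    (rule grad_sq_cut_power_le[OF assms])

text \<open>Applied with \<open>A = \<rho>\<^bsup>p\<^esup>\<close>, \<open>B = \<rho>\<^bsup>q\<^esup>\<close> (\<open>p, q = (1 \<plusminus> i)/2\<close>), \<open>A'\<close>, \<open>B'\<close> their derivatives
  in \<open>\<rho>\<close>, \<open>A0\<close>, \<open>B0\<close> their values at \<open>\<rho> = e\<^sup>2\<close>, and \<open>dR\<close>, \<open>d\<eta>\<close> the partial derivatives
  of \<open>\<rho>\<close> and of the cutoff \<open>\<eta>\<close>.\<close>

lemma wronskian_cutoff_identity:
  fixes A B A0 B0 A' B' \<eta> dR d\<eta> :: complex
  assumes "B * A' - A * B' = \<i>" "(B * A0 - A * B0) * d\<eta> = 0" "(1 - \<eta>) * dR = 0"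
  shows "(- \<i> * (B - B0 * (1 - \<eta>))) * (A' * dR + A0 * d\<eta>)
      - (A - A0 * (1 - \<eta>)) * (- \<i> * (B' * dR + B0 * d\<eta>)) = dR"
proof -
  have "(- \<i> * (B - B0 * (1 - \<eta>))) * (A' * dR + A0 * d\<eta>)
      - (A - A0 * (1 - \<eta>)) * (- \<i> * (B' * dR + B0 * d\<eta>))
      = - \<i> * ((B * A' - A * B') * dR + (B * A0 - A * B0) * d\<eta> - (B0 * A' - A0 * B') * ((1 - \<eta>) * dR))"
    by (simp add: algebra_simps)
  then show ?thesis
    using assms by simp
qed

lemma powr_wronskian:
  fixes R :: complex
  assumes "R \<noteq> 0"
  shows "R powr ((1 - \<i>) / 2) * ((1 + \<i>) / 2 * R powr ((1 + \<i>) / 2 - 1))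
      - R powr ((1 + \<i>) / 2) * ((1 - \<i>) / 2 * R powr ((1 - \<i>) / 2 - 1)) = \<i>"
proof -
  have "(1 - \<i>) / 2 + ((1 + \<i>) / 2 - 1) = 0" "(1 + \<i>) / 2 + ((1 - \<i>) / 2 - 1) = 0"
    by (simp_all add: complex_eq_iff)
  then have "R powr ((1 - \<i>) / 2) * R powr ((1 + \<i>) / 2 - 1) = R powr 0"
    "R powr ((1 + \<i>) / 2) * R powr ((1 - \<i>) / 2 - 1) = R powr 0"
    by (simp_all only: powr_add[symmetric])
  then show ?thesis
    using assms by (simp add: algebra_simps) (simp add: complex_eq_iff)
qed

lemma pd_eq_0_where_nonzero:
  assumes "test_fun w" "\<forall>x\<in>supp w. \<eta> x = 1" "w x \<noteq> 0"
  shows "pd i \<eta> x = 0"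
proof -
  have "continuous_on UNIV w"
    using assms(1) by (intro continuous_at_imp_continuous_on ballI differentiable_imp_continuous_within
        test_fun_differentiable)
  then have "open {y. w y \<noteq> 0}"
    using open_Collect_neq[of w "\<lambda>_. 0"] by simp
  moreover have "\<eta> y = 1" if "w y \<noteq> 0" for y
    using assms(2) notin_supp_zero that by blast
  ultimately show ?thesis
    using assms(3) by (intro pd_locally_const[of "{y. w y \<noteq> 0}" x \<eta> 1]) auto
qed

lemma cut_power_wronskian:
  assumes "test_fun w" "\<forall>x. w x \<in> \<real>" "e > 0" "test_fun \<eta>" "\<forall>x\<in>supp w. \<eta> x = 1"
  shows "(- \<i> * cut_power ((1 - \<i>) / 2) e w \<eta> x) * pd i (cut_power ((1 + \<i>) / 2) e w \<eta>) x
       - cut_power ((1 + \<i>) / 2) e w \<eta> x * pd i (\<lambda>x. - \<i> * cut_power ((1 - \<i>) / 2) e w \<eta> x) x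
       = pd i (\<lambda>x. w x * w x) x"
proof -
  define R where "R = w x * w x + of_real (e^2)"
  define P :: complex where "P = of_real (e^2)"
  have "R \<noteq> 0"
    using real_sq_add_pos_notin_nonpos_Reals[of "w x" e] assms(2,3) unfolding R_def by auto
  have h2: "(R powr ((1 - \<i>) / 2) * P powr ((1 + \<i>) / 2) - R powr ((1 + \<i>) / 2) * P powr ((1 - \<i>) / 2))
      * pd i \<eta> x = 0"
    using pd_eq_0_where_nonzero[OF assms(1,5)] by (cases "w x = 0") (auto simp: R_def P_def)
  have h3: "(1 - \<eta> x) * pd i (\<lambda>x. w x * w x) x = 0"
  proof (cases "x \<in> supp w")
    case True
    with assms(5) show ?thesis by simp
  next
    case False
    with assms(1) show ?thesis
      by (simp add: pd_mult test_fun_differentiable notin_supp_zero)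
  qed
  have "pd i (\<lambda>x. - \<i> * cut_power ((1 - \<i>) / 2) e w \<eta> x) x
      = - \<i> * pd i (cut_power ((1 - \<i>) / 2) e w \<eta>) x"
    using assms by (intro pd_cmult test_fun_differentiable test_fun_cut_power)
  with wronskian_cutoff_identity[OF powr_wronskian[OF \<open>R \<noteq> 0\<close>] h2 h3] show ?thesis
    by (simp add: cut_power_def pd_cut_power[OF assms(1-4)] R_def P_def)
qed

section \<open>The bound for squares and polarisation\<close>

lemma pair_grad_real_square_le_cutoff:
  fixes F :: "'n::finite \<Rightarrow> (real^'n \<Rightarrow> complex) \<Rightarrow> complex"
  assumes "C \<ge> 0"
    and wronskian_le: "\<And>u v. test_fun u \<Longrightarrow> test_fun v \<Longrightarrow>
      cmod (wronskian_pairing F u v) \<le> C * H1_norm u * H1_norm v"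
    and w: "test_fun w" "\<forall>x. w x \<in> \<real>" and \<eta>: "test_fun \<eta>" "\<forall>x\<in>supp w. \<eta> x = 1" and "e > 0"
  shows "cmod (pair_grad F (\<lambda>x. w x * w x)) \<le> C * (4 * H1_norm w ^ 2 + 2 * e^2 * H1_norm \<eta> ^ 2)"
proof -
  define Q where "Q = 4 * H1_norm w ^ 2 + 2 * e^2 * H1_norm \<eta> ^ 2"
  define a where "a = cut_power ((1 + \<i>) / 2) e w \<eta>"
  define b where "b = (\<lambda>x. - \<i> * cut_power ((1 - \<i>) / 2) e w \<eta> x)"
  have ta: "test_fun a"
    unfolding a_def by (rule test_fun_cut_power[OF w \<open>e > 0\<close> \<eta>(1)])
  have tb: "test_fun b"
    unfolding b_def by (intro test_fun_cmult test_fun_cut_power[OF w \<open>e > 0\<close> \<eta>(1)])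
  have "(\<lambda>x. b x * pd i (\<lambda>y. cnj (cnj (a y))) x - cnj (cnj (a x)) * pd i b x) = pd i (\<lambda>x. w x * w x)"
    for i
    unfolding a_def b_def using cut_power_wronskian[OF w \<open>e > 0\<close> \<eta>] by (simp add: fun_eq_iff)
  then have "pair_grad F (\<lambda>x. w x * w x) = wronskian_pairing F (\<lambda>x. cnj (a x)) b"
    by (simp add: pair_grad_def wronskian_pairing_def)
  also have "cmod \<dots> \<le> C * (H1_norm a * H1_norm b)"
    using wronskian_le[OF test_fun_cnj[OF ta] tb] by (simp add: H1_norm_cnj[OF ta] mult.assoc)
  also have "\<dots> \<le> C * Q"
  proof -
    have "cmod (1 + \<i>) = sqrt 2" "cmod (1 - \<i>) = sqrt 2"
      by (simp_all add: cmod_def)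
    then have "H1_norm a ^ 2 \<le> Q" "H1_norm b ^ 2 \<le> Q"
      using H1_norm_cut_power_sq_le[OF w \<open>e > 0\<close> \<eta>(1), of "(1 + \<i>) / 2"]
        H1_norm_cut_power_sq_le[OF w \<open>e > 0\<close> \<eta>(1), of "(1 - \<i>) / 2"]
        H1_norm_cmult[OF test_fun_cut_power[OF w \<open>e > 0\<close> \<eta>(1)], of "- \<i>" "(1 - \<i>) / 2"]
      by (simp_all add: a_def b_def Q_def power_divide)
    then have "2 * (H1_norm a * H1_norm b) \<le> 2 * Q"
      using sum_squares_bound[of "H1_norm a" "H1_norm b"] by simp
    then show ?thesis
      using \<open>C \<ge> 0\<close> by (simp add: mult_left_mono)
  qed
  finally show ?thesis
    by (simp add: Q_def)
qed

lemma pair_grad_real_square_le: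
  fixes F :: "'n::finite \<Rightarrow> (real^'n \<Rightarrow> complex) \<Rightarrow> complex"
  assumes "C \<ge> 0"
    and "\<And>u v. test_fun u \<Longrightarrow> test_fun v \<Longrightarrow> cmod (wronskian_pairing F u v) \<le> C * H1_norm u * H1_norm v"
    and "test_fun w" "\<forall>x. w x \<in> \<real>"
  shows "cmod (pair_grad F (\<lambda>x. w x * w x)) \<le> 4 * C * H1_norm w ^ 2"
proof -
  obtain \<eta> where \<eta>: "test_fun \<eta>" "\<forall>x\<in>supp w. \<eta> x = 1"
    using bump_exists[OF test_fun_compact_supp[OF assms(3)]] by blast
  define Q where "Q e = C * (4 * H1_norm w ^ 2 + 2 * e^2 * H1_norm \<eta> ^ 2)" for e
  have "(Q \<longlongrightarrow> Q 0) (at_right 0)"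
    unfolding Q_def by (intro tendsto_intros)
  moreover have "eventually (\<lambda>e. cmod (pair_grad F (\<lambda>x. w x * w x)) \<le> Q e) (at_right 0)"
    using eventually_at_right_less
    by (rule eventually_mono) (use pair_grad_real_square_le_cutoff[OF assms \<eta>] in \<open>simp add: Q_def\<close>)
  ultimately have "cmod (pair_grad F (\<lambda>x. w x * w x)) \<le> Q 0"
    by (rule tendsto_lowerbound) simp
  then show ?thesis
    by (simp add: Q_def)
qed

lemma le_of_scaled_bound:
  fixes A K F G :: real
  assumes "K \<ge> 0" "F \<ge> 0" "G \<ge> 0" "\<And>t. t > 0 \<Longrightarrow> A \<le> K * (t^2 * F^2 + G^2 / t^2)"
  shows "A \<le> 2 * K * F * G"
proof -
  have bound: "A \<le> 2 * K * (F + \<delta>) * (G + \<delta>)" if "\<delta> > 0" for \<delta>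
  proof -
    define t where "t = sqrt ((G + \<delta>) / (F + \<delta>))"
    have t: "t > 0" "t^2 = (G + \<delta>) / (F + \<delta>)"
      using that assms(2,3) by (simp_all add: t_def)
    have "A \<le> K * (t^2 * F^2 + G^2 / t^2)"
      using assms(4)[OF t(1)] .
    also have "\<dots> \<le> K * (t^2 * (F + \<delta>)^2 + (G + \<delta>)^2 / t^2)"
      using assms that t(1)
      by (intro mult_left_mono add_mono mult_left_mono divide_right_mono power_mono) auto
    also have "\<dots> = 2 * K * (F + \<delta>) * (G + \<delta>)"
    proof -
      have "F + \<delta> > 0" "G + \<delta> > 0"
        using that assms(2,3) by auto
      then have "t^2 * (F + \<delta>)^2 = (F + \<delta>) * (G + \<delta>)" "(G + \<delta>)^2 / t^2 = (F + \<delta>) * (G + \<delta>)"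
        unfolding t(2) by (simp_all add: power2_eq_square)
      then show ?thesis by simp
    qed
    finally show ?thesis .
  qed
  have "((\<lambda>\<delta>. 2 * K * (F + \<delta>) * (G + \<delta>)) \<longlongrightarrow> 2 * K * (F + 0) * (G + 0)) (at_right 0)"
    by (intro tendsto_intros)
  moreover have "eventually (\<lambda>\<delta>. A \<le> 2 * K * (F + \<delta>) * (G + \<delta>)) (at_right 0)"
    using eventually_at_right_less by (rule eventually_mono) (rule bound)
  ultimately show ?thesis
    by (metis add_0_right tendsto_lowerbound trivial_limit_at_right_real)
qed

lemma pair_grad_real_product_le:
  fixes F :: "'n::finite \<Rightarrow> (real^'n \<Rightarrow> complex) \<Rightarrow> complex"
  assumes dF: "\<forall>i. distribution (F i)" and "K \<ge> 0"
    and square: "\<And>w. test_fun w \<Longrightarrow> \<forall>x. w x \<in> \<real> \<Longrightarrow>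
      cmod (pair_grad F (\<lambda>x. w x * w x)) \<le> K * H1_norm w ^ 2"
    and f: "test_fun f" "\<forall>x. f x \<in> \<real>" and g: "test_fun g" "\<forall>x. g x \<in> \<real>"
  shows "cmod (pair_grad F (\<lambda>x. f x * g x)) \<le> 2 * K * H1_norm f * H1_norm g"
proof (rule le_of_scaled_bound[OF \<open>K \<ge> 0\<close> H1_norm_nonneg H1_norm_nonneg])
  fix t :: real
  assume "t > 0"
  define c :: complex where "c = of_real (1 / t)"
  have tc: "of_real t * c = 1" and c: "cmod c = 1 / t" "c \<in> \<real>"
    using \<open>t > 0\<close> by (simp_all add: c_def norm_divide flip: of_real_mult)
  define s where "s \<sigma> = (\<lambda>x. of_real t * f x + \<sigma> * g x)" for \<sigma> :: complex
  have ts: "test_fun (s \<sigma>)" for \<sigma>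
    unfolding s_def using f g by (intro test_fun_add test_fun_cmult)
  have H1_s: "H1_norm (s \<sigma>) ^ 2 \<le> 2 * t^2 * H1_norm f ^ 2 + 2 * (1 / t)^2 * H1_norm g ^ 2"
    if "cmod \<sigma> = 1 / t" for \<sigma>
    using H1_norm_combination_sq_le[OF f(1) g(1), of "of_real t" \<sigma>] that \<open>t > 0\<close>
    by (simp add: s_def)
  have "s c x * s c x = s (- c) x * s (- c) x + 4 * (of_real t * c) * (f x * g x)" for x
    by (simp add: s_def algebra_simps)
  then have "(\<lambda>x. s c x * s c x) = (\<lambda>x. s (- c) x * s (- c) x + 4 * (f x * g x))"
    by (simp add: tc)
  then have "pair_grad F (\<lambda>x. s c x * s c x)
      = pair_grad F (\<lambda>x. s (- c) x * s (- c) x) + 4 * pair_grad F (\<lambda>x. f x * g x)"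
    using f g ts by (simp add: pair_grad_add[OF dF] pair_grad_cmult[OF dF] test_fun_mult test_fun_cmult)
  then have "4 * cmod (pair_grad F (\<lambda>x. f x * g x))
      = cmod (pair_grad F (\<lambda>x. s c x * s c x) - pair_grad F (\<lambda>x. s (- c) x * s (- c) x))"
    by (simp add: norm_mult)
  also have "\<dots> \<le> cmod (pair_grad F (\<lambda>x. s c x * s c x)) + cmod (pair_grad F (\<lambda>x. s (- c) x * s (- c) x))"
    by (rule norm_triangle_ineq4)
  also have "\<dots> \<le> K * H1_norm (s c) ^ 2 + K * H1_norm (s (- c)) ^ 2"
    using f g c by (intro add_mono square ts) (auto simp: s_def)
  also have "\<dots> = K * (H1_norm (s c) ^ 2 + H1_norm (s (- c)) ^ 2)"
    by (simp add: distrib_left)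
  also have "\<dots> \<le> K * (4 * (t^2 * H1_norm f ^ 2 + H1_norm g ^ 2 / t^2))"
    using H1_s[of c] H1_s[of "- c"] c \<open>K \<ge> 0\<close>
    by (intro mult_left_mono) (simp_all add: power_divide)
  also have "\<dots> = 4 * (K * (t^2 * H1_norm f ^ 2 + H1_norm g ^ 2 / t^2))"
    by (rule mult.left_commute)
  finally show "cmod (pair_grad F (\<lambda>x. f x * g x)) \<le> K * (t^2 * H1_norm f ^ 2 + H1_norm g ^ 2 / t^2)"
    by linarith
qed

lemma sum4_norm_le:
  fixes a b c d :: complex
  shows "cmod (a - b + \<i> * c + \<i> * d) \<le> cmod a + cmod b + cmod c + cmod d"
proof -
  have "cmod (\<i> * c) = cmod c" "cmod (\<i> * d) = cmod d"
    by (simp_all add: norm_mult)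
  with norm_triangle_ineq[of "a - b + \<i> * c" "\<i> * d"] norm_triangle_ineq[of "a - b" "\<i> * c"]
    norm_triangle_ineq4[of a b]
  show ?thesis by linarith
qed

lemma pair_grad_mult_Re_Im:
  assumes dF: "\<forall>i. distribution (F i)" and "test_fun u" "test_fun v"
  shows "pair_grad F (\<lambda>x. u x * v x) =
      pair_grad F (\<lambda>x. of_real (Re (u x)) * of_real (Re (v x)))
    - pair_grad F (\<lambda>x. of_real (Im (u x)) * of_real (Im (v x)))
    + \<i> * pair_grad F (\<lambda>x. of_real (Re (u x)) * of_real (Im (v x)))
    + \<i> * pair_grad F (\<lambda>x. of_real (Im (u x)) * of_real (Re (v x)))"
proof -
  have "(\<lambda>x. u x * v x) = (\<lambda>x. of_real (Re (u x)) * of_real (Re (v x))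
      - of_real (Im (u x)) * of_real (Im (v x)) + \<i> * (of_real (Re (u x)) * of_real (Im (v x)))
      + \<i> * (of_real (Im (u x)) * of_real (Re (v x))))"
    by (simp add: fun_eq_iff complex_eq_iff)
  moreover have "test_fun (\<lambda>x. of_real (Re (u x)))" "test_fun (\<lambda>x. of_real (Im (u x)))"
    "test_fun (\<lambda>x. of_real (Re (v x)))" "test_fun (\<lambda>x. of_real (Im (v x)))"
    using assms(2,3) by (simp_all add: test_fun_Re test_fun_Im)
  ultimately show ?thesis
    by (simp add: pair_grad_add[OF dF] pair_grad_diff[OF dF] pair_grad_cmult[OF dF]
        test_fun_add test_fun_diff test_fun_mult test_fun_cmult)
qed

lemma pair_grad_product_le:
  fixes F :: "'n::finite \<Rightarrow> (real^'n \<Rightarrow> complex) \<Rightarrow> complex"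
  assumes dF: "\<forall>i. distribution (F i)" and "K \<ge> 0"
    and real_le: "\<And>f g. test_fun f \<Longrightarrow> \<forall>x. f x \<in> \<real> \<Longrightarrow> test_fun g \<Longrightarrow> \<forall>x. g x \<in> \<real> \<Longrightarrow>
      cmod (pair_grad F (\<lambda>x. f x * g x)) \<le> K * H1_norm f * H1_norm g"
    and u: "test_fun u" and v: "test_fun v"
  shows "cmod (pair_grad F (\<lambda>x. u x * v x)) \<le> 4 * K * H1_norm u * H1_norm v"
proof -
  have part_le: "cmod (pair_grad F (\<lambda>x. of_real (P (u x)) * of_real (Q (v x))))
      \<le> K * H1_norm u * H1_norm v"
    if "P = Re \<or> P = Im" "Q = Re \<or> Q = Im" for P Q
  proof -
    have parts: "test_fun (\<lambda>x. of_real (P (u x)))" "H1_norm (\<lambda>x. of_real (P (u x))) \<le> H1_norm u"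
        "test_fun (\<lambda>x. of_real (Q (v x)))" "H1_norm (\<lambda>x. of_real (Q (v x))) \<le> H1_norm v"
      using that u v by (auto intro: test_fun_Re test_fun_Im H1_norm_Re_le H1_norm_Im_le)
    then have "cmod (pair_grad F (\<lambda>x. of_real (P (u x)) * of_real (Q (v x))))
        \<le> K * H1_norm (\<lambda>x. of_real (P (u x))) * H1_norm (\<lambda>x. of_real (Q (v x)))"
      by (intro real_le) auto
    also have "\<dots> \<le> K * H1_norm u * H1_norm v"
      using parts \<open>K \<ge> 0\<close> by (intro mult_mono mult_left_mono) (auto simp: H1_norm_nonneg)
    finally show ?thesis .
  qed
  have "cmod (pair_grad F (\<lambda>x. u x * v x))
      \<le> cmod (pair_grad F (\<lambda>x. of_real (Re (u x)) * of_real (Re (v x))))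
      + cmod (pair_grad F (\<lambda>x. of_real (Im (u x)) * of_real (Im (v x))))
      + cmod (pair_grad F (\<lambda>x. of_real (Re (u x)) * of_real (Im (v x))))
      + cmod (pair_grad F (\<lambda>x. of_real (Im (u x)) * of_real (Re (v x))))"
    unfolding pair_grad_mult_Re_Im[OF dF u v] by (rule sum4_norm_le)
  also have "\<dots> \<le> 4 * K * H1_norm u * H1_norm v"
    using part_le[of Re Re] part_le[of Im Im] part_le[of Re Im] part_le[of Im Re] by simp
  finally show ?thesis .
qed

theorem mainTheorem7:
  fixes F :: "'n::finite \<Rightarrow> ((real^'n \<Rightarrow> complex) \<Rightarrow> complex)"
    and f :: "(real^'n \<Rightarrow> complex) \<Rightarrow> complex"
    and C :: real
  assumes "CARD('n) \<ge> 3"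
    and "\<forall>i. distribution (F i)"
    and "C > 0"
    and "\<forall>u v. test_fun u \<longrightarrow> test_fun v \<longrightarrow>
           cmod (\<Sum>i\<in>UNIV. F i (\<lambda>x. v x * pd i (\<lambda>y. cnj (u y)) x - cnj (u x) * pd i v x))
             \<le> C * H1_norm u * H1_norm v"
    and "distribution f"
    and "\<forall>\<phi>. test_fun \<phi> \<longrightarrow> dist_lap f \<phi> = dist_div F \<phi>"
  shows "multiplier_H1 (dist_lap f)"
proof -
  have square: "cmod (pair_grad F (\<lambda>x. w x * w x)) \<le> 4 * C * H1_norm w ^ 2"
    if "test_fun w" "\<forall>x. w x \<in> \<real>" for w
    using assms(3,4) that
    by (intro pair_grad_real_square_le[of C F]) (auto simp: wronskian_pairing_def)
  have real_product: "cmod (pair_grad F (\<lambda>x. u x * v x)) \<le> 2 * (4 * C) * H1_norm u * H1_norm v"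
    if "test_fun u" "\<forall>x. u x \<in> \<real>" "test_fun v" "\<forall>x. v x \<in> \<real>" for u v
    using assms(3) by (intro pair_grad_real_product_le[OF assms(2) _ square that]) auto
  have "cmod (dist_lap f (\<lambda>x. u x * v x)) \<le> 4 * (2 * (4 * C)) * H1_norm u * H1_norm v"
    if "test_fun u" "test_fun v" for u v
  proof -
    have "dist_lap f (\<lambda>x. u x * v x) = - pair_grad F (\<lambda>x. u x * v x)"
      using assms(6) test_fun_mult[OF that] by (simp add: dist_div_def pair_grad_def)
    moreover have "cmod (pair_grad F (\<lambda>x. u x * v x)) \<le> 4 * (2 * (4 * C)) * H1_norm u * H1_norm v"
      using assms(3) by (intro pair_grad_product_le[OF assms(2) _ real_product that]) auto
    ultimately show ?thesis
      by simp
  qed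
  then show ?thesis
    unfolding multiplier_H1_def by blast
qed

end
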